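(* Let $\gamma$ be a Gutkin curve with contact angle $\alpha$ on the unit sphere $\mathbb{S}^2$, with chord parameterizations $x(t),y(t)$, where $x,y$ are arc-length coordinates on $\gamma$, $\kappa$ is the geodesic curvature of $\gamma$ and $'$ denotes $d/dt$. Then along the family of chords $$\frac{y'(t)}{x'(t)}=\frac{\sqrt{\kappa^2(x(t))+\sin^2\alpha}}{\sqrt{\kappa^2(y(t))+\sin^2\alpha}};$$ equivalently, if $t$ is chosen so that $x'=a/\sqrt{\kappa^2(x)+\sin^2\alpha}$ for a constant $a$, then $y'=a/\sqrt{\kappa^2(y)+\sin^2\alpha}$, so that the values of this parameter at the two endpoints of each chord differ by a constant.
   Context: A smooth convex oriented closed curve $C$ on $\mathbb{S}^2$ is a Gutkin curve with contact angle $\alpha\in(0,\pi]$ if there are parameterizations $x(t),y(t)$ of $C$ with $x'(t),y'(t)>0$, $x(t)\ne y(t)$, such that for every $t$ the geodesic chord from $x(t)$ to $y(t)$ makes angle $\alpha$ with $C$ at both ends: at $x(t)$ the angle between the positively oriented tangent of $C$ and the chord direction towards $y(t)$, and at $y(t)$ the angle between the chord direction (from $x(t)$ towards $y(t)$) and the positively oriented tangent of $C$. *)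

theory Defs
  imports "HOL-Analysis.Analysis"
begin

definition vd :: "(real \<Rightarrow> real^3) \<Rightarrow> real \<Rightarrow> real^3" where
  "vd f t = vector_derivative f (at t)"

definition smooth_curve :: "(real \<Rightarrow> real^3) \<Rightarrow> bool" where
  "smooth_curve g \<longleftrightarrow> (\<forall>k s. ((vd ^^ k) g) differentiable (at s))"

text \<open>Geodesic curvature of a unit-speed curve on the unit sphere:
  kappa = det(g, g', g'') = (g x g') . g''.\<close>
definition geod_curv :: "(real \<Rightarrow> real^3) \<Rightarrow> real \<Rightarrow> real" where
  "geod_curv g s = cross3 (g s) (vd g s) \<bullet> vd (vd g) s"

definition sphere_closed_curve :: "(real \<Rightarrow> real^3) \<Rightarrow> real \<Rightarrow> bool" where
  "sphere_closed_curve g L \<longleftrightarrow> L > 0 \<and> smooth_curve g \<and>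
     (\<forall>s. norm (g s) = 1) \<and> (\<forall>s. norm (vd g s) = 1) \<and>
     (\<forall>s. g (s + L) = g s) \<and> inj_on g {0..<L}"

text \<open>Convex and positively oriented: lies in an open hemisphere and has
  nonnegative geodesic curvature (the enclosed convex region is to the left).\<close>
definition convex_sphere_curve :: "(real \<Rightarrow> real^3) \<Rightarrow> real \<Rightarrow> bool" where
  "convex_sphere_curve g L \<longleftrightarrow> sphere_closed_curve g L \<and>
     (\<exists>n. \<forall>s. g s \<bullet> n > 0) \<and> (\<forall>s. geod_curv g s \<ge> 0)"

definition vec_angle :: "real^3 \<Rightarrow> real^3 \<Rightarrow> real" where
  "vec_angle u v = arccos ((u \<bullet> v) / (norm u * norm v))"

text \<open>Unit tangent at p of the minimizing great-circle arc from p to q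
  (p, q on S^2, not antipodal), pointing towards q.\<close>
definition chord_dir_start :: "real^3 \<Rightarrow> real^3 \<Rightarrow> real^3" where
  "chord_dir_start p q = (1 / norm (q - (p \<bullet> q) *\<^sub>R p)) *\<^sub>R (q - (p \<bullet> q) *\<^sub>R p)"

text \<open>Unit tangent at q of the arc from p to q, pointing in the direction of
  travel from p towards q (i.e. away from p).\<close>
definition chord_dir_end :: "real^3 \<Rightarrow> real^3 \<Rightarrow> real^3" where
  "chord_dir_end p q = - chord_dir_start q p"

definition gutkin :: "(real \<Rightarrow> real^3) \<Rightarrow> real \<Rightarrow> real \<Rightarrow> (real \<Rightarrow> real) \<Rightarrow> (real \<Rightarrow> real) \<Rightarrow> bool" where
  "gutkin g L \<alpha> x y \<longleftrightarrow> convex_sphere_curve g L \<and> 0 < \<alpha> \<and> \<alpha> \<le> pi \<and>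
     (\<forall>t. x differentiable (at t) \<and> y differentiable (at t) \<and> deriv x t > 0 \<and> deriv y t > 0) \<and>
     range (g \<circ> x) = range g \<and> range (g \<circ> y) = range g \<and>
     (\<forall>t. g (x t) \<noteq> g (y t)) \<and>
     (\<forall>t. vec_angle (vd g (x t)) (chord_dir_start (g (x t)) (g (y t))) = \<alpha> \<and>
          vec_angle (chord_dir_end (g (x t)) (g (y t))) (vd g (y t)) = \<alpha>)"

end

(*
  Let P, Q be the endpoints of a chord, T_P, T_Q the unit tangents there and s the sine of
  the chord length. The contact conditions read T_P . Q = s cos \<alpha> and P . T_Q = - s cos \<alpha>,
  so the normal components (P \<times> T_P) . Q and (Q \<times> T_Q) . P both have modulus s sin \<alpha>.
  Differentiating the two contact conditions along the family of chords gives two equations,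
  linear in x' and y', in which the geodesic curvatures appear only multiplied by these normal
  components; eliminating them leaves y'^2 (\<kappa>(y)^2 + sin^2 \<alpha>) = x'^2 (\<kappa>(x)^2 + sin^2 \<alpha>).

  For \<alpha> = pi the normal components vanish identically, and differentiating this identity gives
  \<kappa> = 0 along the curve. A closed geodesic of the sphere is a great circle, which does not fit
  into an open hemisphere, so this case does not occur.
*)
theory Submission
  imports Defs "HOL-Library.Periodic_Fun"
begin

unbundle cross3_syntax

lemma cramer_cross3:
  fixes a b c v :: "real^3"
  shows "(a \<bullet> (b \<times> c)) *\<^sub>R v = (v \<bullet> (b \<times> c)) *\<^sub>R a + (v \<bullet> (c \<times> a)) *\<^sub>R b + (v \<bullet> (a \<times> b)) *\<^sub>R c"
  by (auto simp: cross3_simps forall_3)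

lemma orthonormal_frame_expansion:
  fixes a b v :: "real^3"
  assumes "a \<bullet> a = 1" "b \<bullet> b = 1" "a \<bullet> b = 0"
  shows "v = (v \<bullet> a) *\<^sub>R a + (v \<bullet> b) *\<^sub>R b + (v \<bullet> (a \<times> b)) *\<^sub>R (a \<times> b)"
proof -
  have "b \<times> (a \<times> b) = a" "(a \<times> b) \<times> a = b"
    using assms by (simp_all add: Lagrange inner_commute cross_skew[of _ a])
  then show ?thesis
    using cramer_cross3[of a b "a \<times> b" v] assms by simp
qed

lemma inner_orthonormal_frame:
  fixes a b v w :: "real^3"
  assumes "a \<bullet> a = 1" "b \<bullet> b = 1" "a \<bullet> b = 0"
  shows "v \<bullet> w = (v \<bullet> a) * (w \<bullet> a) + (v \<bullet> b) * (w \<bullet> b) + (v \<bullet> (a \<times> b)) * (w \<bullet> (a \<times> b))"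
proof -
  have "v \<bullet> w = ((v \<bullet> a) *\<^sub>R a + (v \<bullet> b) *\<^sub>R b + (v \<bullet> (a \<times> b)) *\<^sub>R (a \<times> b)) \<bullet> w"
    by (rule arg_cong[OF orthonormal_frame_expansion[OF assms]])
  then show ?thesis
    by (simp only: inner_add_left inner_scaleR_left) (simp add: inner_commute)
qed

lemma triple_product_mult:
  fixes a b c d e f :: "real^3"
  shows "((a \<times> b) \<bullet> c) * ((d \<times> e) \<bullet> f) =
    (a \<bullet> d) * ((b \<bullet> e) * (c \<bullet> f) - (b \<bullet> f) * (c \<bullet> e))
  - (a \<bullet> e) * ((b \<bullet> d) * (c \<bullet> f) - (b \<bullet> f) * (c \<bullet> d))
  + (a \<bullet> f) * ((b \<bullet> d) * (c \<bullet> e) - (b \<bullet> e) * (c \<bullet> d))"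
  by (simp add: cross3_simps)

lemma chord_speed_algebra:
  fixes c s q k1 k2 n1 n2 x' y' :: real
  assumes "s > 0" "q > 0" "s\<^sup>2 + c\<^sup>2 = 1" "n1\<^sup>2 = s\<^sup>2 * q\<^sup>2" "n2\<^sup>2 = s\<^sup>2 * q\<^sup>2"
    and E1: "s\<^sup>2 * x' * (k1 * n1 - c * q\<^sup>2) = y' * n1 * n2"
    and E2: "s\<^sup>2 * y' * (k2 * n2 - c * q\<^sup>2) = x' * n1 * n2"
  shows "y'\<^sup>2 * (k2\<^sup>2 + q\<^sup>2) = x'\<^sup>2 * (k1\<^sup>2 + q\<^sup>2)"
proof -
  have sq: "s\<^sup>2 * q\<^sup>2 \<noteq> 0" using assms(1,2) by simp
  have "s\<^sup>2 * q\<^sup>2 * (x' * (s\<^sup>2 * k1 - c * n1)) = s\<^sup>2 * q\<^sup>2 * (y' * n2)"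
    using E1 assms(4,5) by algebra
  then have F1: "x' * (s\<^sup>2 * k1 - c * n1) = y' * n2" using sq by simp
  have "s\<^sup>2 * q\<^sup>2 * (y' * (s\<^sup>2 * k2 - c * n2)) = s\<^sup>2 * q\<^sup>2 * (x' * n1)"
    using E2 assms(4,5) by algebra
  then have F2: "y' * (s\<^sup>2 * k2 - c * n2) = x' * n1" using sq by simp
  \<comment> \<open>eliminating either curvature yields the same expression, symmetric in the endpoints\<close>
  have "s ^ 4 * (y'\<^sup>2 * (k2\<^sup>2 + q\<^sup>2)) = s\<^sup>2 * q\<^sup>2 * (x'\<^sup>2 + y'\<^sup>2) + 2 * c * x' * y' * n1 * n2"
    using F2 assms(3-5) by algebra
  also have "\<dots> = s ^ 4 * (x'\<^sup>2 * (k1\<^sup>2 + q\<^sup>2))"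
    using F1 assms(3-5) by algebra
  finally show ?thesis using assms(1) by simp
qed

text \<open>The position, velocity and acceleration of a unit-speed curve on the unit sphere at one
  point; the last two conditions are the derivatives of \<open>v \<bullet> v = 1\<close> and \<open>p \<bullet> v = 0\<close>.\<close>
definition sphere_2jet :: "real^3 \<Rightarrow> real^3 \<Rightarrow> real^3 \<Rightarrow> bool" where
  "sphere_2jet p v a \<longleftrightarrow> p \<bullet> p = 1 \<and> v \<bullet> v = 1 \<and> p \<bullet> v = 0 \<and> a \<bullet> v = 0 \<and> a \<bullet> p = -1"

lemma sphere_2jet_curvature_component:
  assumes "sphere_2jet p v a"
  shows "a \<bullet> w = - (p \<bullet> w) + ((p \<times> v) \<bullet> a) * ((p \<times> v) \<bullet> w)"
  using inner_orthonormal_frame[of p v a w] assms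
  by (simp add: sphere_2jet_def inner_commute)

lemma chord_frame_relation:
  fixes P TP GP Q TQ GQ :: "real^3" and s ca sa x' y' :: real
  assumes jets: "sphere_2jet P TP GP" "sphere_2jet Q TQ GQ"
    and s: "s > 0" "s\<^sup>2 = 1 - (P \<bullet> Q)\<^sup>2"
    and angle: "sa > 0" "sa\<^sup>2 + ca\<^sup>2 = 1"
    and contact: "TP \<bullet> Q = s * ca" "P \<bullet> TQ = - (s * ca)"
    and D1: "x' * (GP \<bullet> Q) + y' * (TP \<bullet> TQ) + ca\<^sup>2 * (P \<bullet> Q) * (x' - y') = 0"
    and D2: "x' * (TP \<bullet> TQ) + y' * (P \<bullet> GQ) - ca\<^sup>2 * (P \<bullet> Q) * (x' - y') = 0"
  shows "y'\<^sup>2 * (((Q \<times> TQ) \<bullet> GQ)\<^sup>2 + sa\<^sup>2) = x'\<^sup>2 * (((P \<times> TP) \<bullet> GP)\<^sup>2 + sa\<^sup>2)"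
proof -
  define c where "c = P \<bullet> Q"
  define w where "w = TP \<bullet> TQ"
  define n1 where "n1 = (P \<times> TP) \<bullet> Q"
  define n2 where "n2 = (Q \<times> TQ) \<bullet> P"
  define k1 where "k1 = (P \<times> TP) \<bullet> GP"
  define k2 where "k2 = (Q \<times> TQ) \<bullet> GQ"
  have unit: "P \<bullet> P = 1" "TP \<bullet> TP = 1" "P \<bullet> TP = 0" "Q \<bullet> Q = 1" "TQ \<bullet> TQ = 1" "Q \<bullet> TQ = 0"
    using jets by (auto simp: sphere_2jet_def)
  have GPQ: "GP \<bullet> Q = - c + k1 * n1" and PGQ: "P \<bullet> GQ = - c + k2 * n2"
    using sphere_2jet_curvature_component[OF jets(1), of Q]
      sphere_2jet_curvature_component[OF jets(2), of P]
    by (simp_all add: c_def k1_def k2_def n1_def n2_def inner_commute)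
  have "Q \<bullet> Q = c\<^sup>2 + (s * ca)\<^sup>2 + n1\<^sup>2"
    using inner_orthonormal_frame[of P TP Q Q] unit contact
    by (simp add: c_def n1_def inner_commute power2_eq_square)
  then have n1: "n1\<^sup>2 = s\<^sup>2 * sa\<^sup>2"
    using unit s(2) angle(2) unfolding c_def by algebra
  have "P \<bullet> P = c\<^sup>2 + (s * ca)\<^sup>2 + n2\<^sup>2"
    using inner_orthonormal_frame[of Q TQ P P] unit contact
    by (simp add: c_def n2_def inner_commute power2_eq_square)
  then have n2: "n2\<^sup>2 = s\<^sup>2 * sa\<^sup>2"
    using unit s(2) angle(2) unfolding c_def by algebra
  have n12: "n1 * n2 = c\<^sup>2 * w + s\<^sup>2 * ca\<^sup>2 * c - w"
    using triple_product_mult[of P TP Q Q TQ P] unit contact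
    by (simp add: n1_def n2_def c_def w_def inner_commute algebra_simps power2_eq_square)
  have s2: "s\<^sup>2 + c\<^sup>2 = 1" using s(2) by (simp add: c_def)
  have E1: "s\<^sup>2 * x' * (k1 * n1 - c * sa\<^sup>2) = y' * n1 * n2"
    using D1 GPQ n12 s2 angle(2) unfolding c_def[symmetric] w_def[symmetric] by algebra
  have E2: "s\<^sup>2 * y' * (k2 * n2 - c * sa\<^sup>2) = x' * n1 * n2"
    using D2 PGQ n12 s2 angle(2) unfolding c_def[symmetric] w_def[symmetric] by algebra
  show ?thesis
    using chord_speed_algebra[OF s(1) angle(1) s2 n1 n2 E1 E2] by (simp add: k1_def k2_def)
qed

lemma has_real_derivative_inner:
  fixes f h :: "real \<Rightarrow> 'a::real_inner"
  assumes "(f has_vector_derivative f') (at t)" "(h has_vector_derivative h') (at t)"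
  shows "((\<lambda>u. f u \<bullet> h u) has_real_derivative (f t \<bullet> h' + f' \<bullet> h t)) (at t)"
  using bounded_bilinear.has_vector_derivative[OF bounded_bilinear_inner assms]
  by (simp add: has_real_derivative_iff_has_vector_derivative)

lemma has_vector_derivative_cross3:
  fixes f h :: "real \<Rightarrow> real^3"
  assumes "(f has_vector_derivative f') (at t)" "(h has_vector_derivative h') (at t)"
  shows "((\<lambda>u. f u \<times> h u) has_vector_derivative (f t \<times> h' + f' \<times> h t)) (at t)"
proof -
  have "bounded_bilinear cross3"
    using bilinear_cross bilinear_conv_bounded_bilinear by blast
  from bounded_bilinear.has_vector_derivative[OF this assms] show ?thesis .
qed

lemma has_real_derivative_const_eq_0:
  fixes F :: "real \<Rightarrow> real"
  assumes "(F has_real_derivative D) (at t)" "\<And>u. F u = k"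
  shows "D = 0"
proof -
  have "F = (\<lambda>u. k)" using assms(2) by blast
  then show ?thesis using DERIV_unique[OF assms(1)] DERIV_const by blast
qed

lemma has_vector_derivative_reparam:
  fixes f :: "real \<Rightarrow> real^3" and x :: "real \<Rightarrow> real"
  assumes "(x has_real_derivative x') (at t)" "(f has_vector_derivative v) (at (x t))"
  shows "((\<lambda>u. f (x u)) has_vector_derivative (x' *\<^sub>R v)) (at t)"
  using vector_diff_chain_at[OF assms(1)[unfolded has_real_derivative_iff_has_vector_derivative] assms(2)]
  by (simp add: o_def)

lemma vd_periodic:
  assumes "\<And>s. f (s + L) = f s" "\<And>s. (f has_vector_derivative vd f s) (at s)"
  shows "vd f (s + L) = vd f s"
proof -
  have "((\<lambda>u. f (u + L)) has_vector_derivative (1 *\<^sub>R vd f (s + L))) (at s)"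
    by (rule has_vector_derivative_reparam[OF _ assms(2)]) (auto intro!: derivative_eq_intros)
  then have "(f has_vector_derivative vd f (s + L)) (at s)" using assms(1) by simp
  then show ?thesis using assms(2)[of s] vector_derivative_unique_at by blast
qed

lemma sphere_closed_curve_has_vd:
  assumes "sphere_closed_curve g L"
  shows "(g has_vector_derivative vd g s) (at s)"
    and "(vd g has_vector_derivative vd (vd g) s) (at s)"
proof -
  have "((vd ^^ k) g) differentiable (at s)" for k
    using assms by (simp add: sphere_closed_curve_def smooth_curve_def)
  from this[of 0] this[of 1] show "(g has_vector_derivative vd g s) (at s)"
    and "(vd g has_vector_derivative vd (vd g) s) (at s)"
    by (simp_all add: vd_def vector_derivative_works[symmetric])
qed

lemma sphere_closed_curve_2jet:
  assumes "sphere_closed_curve g L"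
  shows "sphere_2jet (g s) (vd g s) (vd (vd g) s)"
proof -
  note has_vd = sphere_closed_curve_has_vd[OF assms]
  have gg: "g u \<bullet> g u = 1" and TT: "vd g u \<bullet> vd g u = 1" for u
    using assms by (auto simp: sphere_closed_curve_def norm_eq_sqrt_inner)
  have gT: "g u \<bullet> vd g u = 0" for u
    using has_real_derivative_const_eq_0[OF has_real_derivative_inner[OF has_vd(1) has_vd(1)] gg]
    by (simp add: inner_commute)
  have "vd (vd g) s \<bullet> vd g s = 0"
    using has_real_derivative_const_eq_0[OF has_real_derivative_inner[OF has_vd(2) has_vd(2)] TT]
    by (simp add: inner_commute)
  moreover have "vd (vd g) s \<bullet> g s = -1"
    using has_real_derivative_const_eq_0[OF has_real_derivative_inner[OF has_vd(1)[of s] has_vd(2)[of s]] gT] TT[of s]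
    by (simp add: inner_commute)
  ultimately show ?thesis using gg gT TT by (simp add: sphere_2jet_def)
qed

lemma geod_curv_eq_if_same_point:
  assumes "sphere_closed_curve g L" "g s = g s'"
  shows "geod_curv g s = geod_curv g s'"
proof -
  have L: "L > 0" and inj: "inj_on g {0..<L}" and g_periodic: "\<And>s. g (s + L) = g s"
    using assms(1) by (auto simp: sphere_closed_curve_def)
  note has_vd = sphere_closed_curve_has_vd[OF assms(1)]
  have T_periodic: "vd g (s + L) = vd g s" for s by (rule vd_periodic[OF g_periodic has_vd(1)])
  have G_periodic: "vd (vd g) (s + L) = vd (vd g) s" for s
    by (rule vd_periodic[OF T_periodic has_vd(2)])
  interpret g: periodic_fun_simple g L by standard (rule g_periodic)
  interpret k: periodic_fun_simple "geod_curv g" L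
    by standard (simp add: geod_curv_def g_periodic T_periodic G_periodic)
  define r where "r a = L * frac (a / L)" for a
  have r_range: "r a \<in> {0..<L}" for a
    using L frac_lt_1[of "a / L"] by (simp add: r_def)
  have r_shift: "r a + of_int \<lfloor>a / L\<rfloor> * L = a" for a
    using L by (simp add: r_def frac_def algebra_simps)
  have g_r: "g (r a) = g a" and k_r: "geod_curv g (r a) = geod_curv g a" for a
    using g.plus_of_int[of "r a" "\<lfloor>a / L\<rfloor>"] k.plus_of_int[of "r a" "\<lfloor>a / L\<rfloor>"]
    by (simp_all add: r_shift)
  have "g (r s) = g (r s')" using assms(2) by (simp add: g_r)
  then have "r s = r s'" using inj_onD[OF inj] r_range by blast
  then show ?thesis by (metis k_r)
qed

lemma geodesic_closed_curve_not_in_hemisphere: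
  assumes "sphere_closed_curve g L" "\<And>s. geod_curv g s = 0" "\<And>s. g s \<bullet> n > 0"
  shows False
proof -
  note has_vd = sphere_closed_curve_has_vd[OF assms(1)]
  have G: "vd (vd g) s = - g s" for s
  proof -
    have jet: "sphere_2jet (g s) (vd g s) (vd (vd g) s)"
      by (rule sphere_closed_curve_2jet[OF assms(1)])
    then have "vd (vd g) s = (vd (vd g) s \<bullet> g s) *\<^sub>R g s + (vd (vd g) s \<bullet> vd g s) *\<^sub>R vd g s
        + (vd (vd g) s \<bullet> (g s \<times> vd g s)) *\<^sub>R (g s \<times> vd g s)"
      by (intro orthonormal_frame_expansion) (simp_all add: sphere_2jet_def)
    moreover have "vd (vd g) s \<bullet> g s = -1" "vd (vd g) s \<bullet> vd g s = 0"
      "vd (vd g) s \<bullet> (g s \<times> vd g s) = 0"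
      using jet assms(2)[of s] by (simp_all add: sphere_2jet_def geod_curv_def inner_commute)
    ultimately show ?thesis by simp
  qed
  \<comment> \<open>\<open>h = g \<bullet> n\<close> solves \<open>h'' = - h\<close>, so its Wronskian with \<open>sin\<close> is constant,
    forcing \<open>h pi = - h 0\<close>\<close>
  define W where "W u = (vd g u \<bullet> n) * sin u - (g u \<bullet> n) * cos u" for u
  have "(W has_real_derivative 0) (at s)" for s
  proof -
    have n: "((\<lambda>u. n) has_vector_derivative 0) (at s)" by (rule has_vector_derivative_const)
    have "((\<lambda>u. vd g u \<bullet> n) has_real_derivative - (g s \<bullet> n)) (at s)"
      using has_real_derivative_inner[OF has_vd(2) n] G[of s] by simp
    moreover have "((\<lambda>u. g u \<bullet> n) has_real_derivative (vd g s \<bullet> n)) (at s)"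
      using has_real_derivative_inner[OF has_vd(1) n] by simp
    ultimately show ?thesis
      unfolding W_def[abs_def]
      by (rule DERIV_cong[OF DERIV_diff[OF DERIV_mult[OF _ DERIV_sin] DERIV_mult[OF _ DERIV_cos]]]) simp
  qed
  then have "W 0 = W pi" by (intro DERIV_isconst_all) auto
  moreover have "W 0 < 0" "W pi > 0" using assms(3)[of 0] assms(3)[of pi] by (simp_all add: W_def)
  ultimately show False by simp
qed

lemma unit_inner_sq_less_1:
  fixes p q n :: "real^3"
  assumes "p \<bullet> p = 1" "q \<bullet> q = 1" "p \<noteq> q" "p \<bullet> n > 0" "q \<bullet> n > 0"
  shows "(p \<bullet> q)\<^sup>2 < 1"
proof -
  have "\<bar>p \<bullet> q\<bar> \<le> 1"
    using Cauchy_Schwarz_ineq2[of p q] assms(1,2) by (simp add: norm_eq_sqrt_inner)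
  moreover have "p \<bullet> q \<noteq> 1"
  proof
    assume "p \<bullet> q = 1"
    then have "(p - q) \<bullet> (p - q) = 0" using assms(1,2) by (simp add: inner_diff inner_commute)
    then show False using assms(3) by simp
  qed
  moreover have "p \<bullet> q \<noteq> -1"
  proof
    assume "p \<bullet> q = -1"
    then have "(p + q) \<bullet> (p + q) = 0" using assms(1,2) by (simp add: inner_add inner_commute)
    then have "p = - q" by (simp add: eq_neg_iff_add_eq_0)
    then show False using assms(4,5) by simp
  qed
  ultimately have "\<bar>p \<bullet> q\<bar> < 1" by linarith
  then show ?thesis by (simp add: abs_square_less_1)
qed

lemma norm_sub_inner_scaleR:
  fixes p q :: "real^3"
  assumes "p \<bullet> p = 1" "q \<bullet> q = 1"
  shows "norm (q - (p \<bullet> q) *\<^sub>R p) = sqrt (1 - (p \<bullet> q)\<^sup>2)"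
proof -
  have "(q - (p \<bullet> q) *\<^sub>R p) \<bullet> (q - (p \<bullet> q) *\<^sub>R p) = 1 - (p \<bullet> q)\<^sup>2"
    using assms by (simp add: inner_diff inner_commute power2_eq_square algebra_simps)
  then show ?thesis by (simp add: norm_eq_sqrt_inner)
qed

lemma norm_chord_dir_start:
  fixes p q :: "real^3"
  assumes "p \<bullet> p = 1" "q \<bullet> q = 1" "(p \<bullet> q)\<^sup>2 < 1"
  shows "norm (chord_dir_start p q) = 1"
  using norm_sub_inner_scaleR[OF assms(1,2)] assms(3) by (simp add: chord_dir_start_def)

lemma inner_chord_dir_start:
  fixes p q v :: "real^3"
  assumes "p \<bullet> p = 1" "q \<bullet> q = 1" "v \<bullet> p = 0"
  shows "v \<bullet> chord_dir_start p q = (v \<bullet> q) / sqrt (1 - (p \<bullet> q)\<^sup>2)"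
  using norm_sub_inner_scaleR[OF assms(1,2)] assms(3) by (simp add: chord_dir_start_def inner_diff_right)

lemma inner_eq_cos_vec_angle:
  fixes u v :: "real^3"
  assumes "norm u = 1" "norm v = 1"
  shows "u \<bullet> v = cos (vec_angle u v)"
proof -
  have "\<bar>u \<bullet> v\<bar> \<le> 1" using Cauchy_Schwarz_ineq2[of u v] assms by simp
  then show ?thesis using assms by (simp add: vec_angle_def)
qed

locale gutkin_curve =
  fixes g :: "real \<Rightarrow> real^3" and L \<alpha> :: real and x y :: "real \<Rightarrow> real"
  assumes gutkin: "gutkin g L \<alpha> x y"
begin

lemma closed: "sphere_closed_curve g L"
  using gutkin by (simp add: gutkin_def convex_sphere_curve_def)

lemma hemisphere: obtains n where "\<And>s. g s \<bullet> n > 0"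
  using gutkin unfolding gutkin_def convex_sphere_curve_def by blast

lemma jet: "sphere_2jet (g s) (vd g s) (vd (vd g) s)"
  by (rule sphere_closed_curve_2jet[OF closed])

lemma has_vd: "(g has_vector_derivative vd g s) (at s)" "(vd g has_vector_derivative vd (vd g) s) (at s)"
  by (rule sphere_closed_curve_has_vd[OF closed])+

lemma endpoint_derivs:
  "(x has_real_derivative deriv x t) (at t)" "(y has_real_derivative deriv y t) (at t)"
  "deriv x t > 0" "deriv y t > 0"
  using gutkin by (auto simp: gutkin_def DERIV_deriv_iff_real_differentiable)

lemma chord_not_antipodal: "(g (x t) \<bullet> g (y t))\<^sup>2 < 1"
proof -
  obtain n where "\<And>s. g s \<bullet> n > 0" using hemisphere by blast
  moreover have "g (x t) \<noteq> g (y t)" using gutkin by (simp add: gutkin_def)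
  ultimately show ?thesis
    using jet by (intro unit_inner_sq_less_1) (auto simp: sphere_2jet_def)
qed

lemma contact_equations:
  fixes t :: real
  defines "s \<equiv> sqrt (1 - (g (x t) \<bullet> g (y t))\<^sup>2)"
  shows "vd g (x t) \<bullet> g (y t) = s * cos \<alpha>"
    and "g (x t) \<bullet> vd g (y t) = - (s * cos \<alpha>)"
proof -
  have angles: "vec_angle (vd g (x t)) (chord_dir_start (g (x t)) (g (y t))) = \<alpha>"
      "vec_angle (chord_dir_end (g (x t)) (g (y t))) (vd g (y t)) = \<alpha>"
    using gutkin by (simp_all add: gutkin_def)
  have unit: "g u \<bullet> g u = 1" "norm (vd g u) = 1" "vd g u \<bullet> g u = 0" for u
    using jet[of u] by (simp_all add: sphere_2jet_def norm_eq_sqrt_inner inner_commute)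
  have s: "s > 0" using chord_not_antipodal[of t] by (simp add: s_def)
  have dir_xy: "norm (chord_dir_start (g (x t)) (g (y t))) = 1"
      "vd g (x t) \<bullet> chord_dir_start (g (x t)) (g (y t)) = (vd g (x t) \<bullet> g (y t)) / s"
    using norm_chord_dir_start[OF unit(1) unit(1) chord_not_antipodal[of t]]
      inner_chord_dir_start[OF unit(1) unit(1) unit(3)] by (simp_all add: s_def)
  have dir_yx: "norm (chord_dir_start (g (y t)) (g (x t))) = 1"
      "vd g (y t) \<bullet> chord_dir_start (g (y t)) (g (x t)) = (vd g (y t) \<bullet> g (x t)) / s"
    using norm_chord_dir_start[OF unit(1) unit(1), of "y t" "x t"] chord_not_antipodal[of t]
      inner_chord_dir_start[OF unit(1) unit(1) unit(3)]
    by (simp_all add: s_def inner_commute)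
  have "(vd g (x t) \<bullet> g (y t)) / s = cos \<alpha>"
    using inner_eq_cos_vec_angle[OF unit(2) dir_xy(1)] dir_xy(2) angles(1) by simp
  then show "vd g (x t) \<bullet> g (y t) = s * cos \<alpha>" using s by (simp add: field_simps)
  have "- ((vd g (y t) \<bullet> g (x t)) / s) = cos \<alpha>"
    using inner_eq_cos_vec_angle[of "chord_dir_end (g (x t)) (g (y t))" "vd g (y t)"] dir_yx unit(2) angles(2)
    by (simp add: chord_dir_end_def inner_commute)
  then show "g (x t) \<bullet> vd g (y t) = - (s * cos \<alpha>)" using s by (simp add: field_simps inner_commute)
qed

lemma endpoint_has_vd:
  "((\<lambda>u. g (x u)) has_vector_derivative deriv x t *\<^sub>R vd g (x t)) (at t)"
  "((\<lambda>u. g (y u)) has_vector_derivative deriv y t *\<^sub>R vd g (y t)) (at t)"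
  "((\<lambda>u. vd g (x u)) has_vector_derivative deriv x t *\<^sub>R vd (vd g) (x t)) (at t)"
  "((\<lambda>u. vd g (y u)) has_vector_derivative deriv y t *\<^sub>R vd (vd g) (y t)) (at t)"
  by (rule has_vector_derivative_reparam[OF endpoint_derivs(1) has_vd(1)]
      has_vector_derivative_reparam[OF endpoint_derivs(2) has_vd(1)]
      has_vector_derivative_reparam[OF endpoint_derivs(1) has_vd(2)]
      has_vector_derivative_reparam[OF endpoint_derivs(2) has_vd(2)])+

lemma chord_sine_has_derivative:
  "((\<lambda>u. sqrt (1 - (g (x u) \<bullet> g (y u))\<^sup>2)) has_real_derivative
      - ((g (x t) \<bullet> g (y t)) * cos \<alpha> * (deriv x t - deriv y t))) (at t)"
proof -
  define c where "c = g (x t) \<bullet> g (y t)"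
  define s where "s = sqrt (1 - c\<^sup>2)"
  have c: "c\<^sup>2 < 1" using chord_not_antipodal[of t] by (simp add: c_def)
  have "((\<lambda>u. g (x u) \<bullet> g (y u)) has_real_derivative
      deriv x t * (vd g (x t) \<bullet> g (y t)) + deriv y t * (g (x t) \<bullet> vd g (y t))) (at t)"
    using has_real_derivative_inner[OF endpoint_has_vd(1,2)] by (simp add: algebra_simps)
  moreover have "deriv x t * (vd g (x t) \<bullet> g (y t)) + deriv y t * (g (x t) \<bullet> vd g (y t))
      = s * cos \<alpha> * (deriv x t - deriv y t)"
    by (simp add: contact_equations s_def c_def algebra_simps)
  ultimately have "((\<lambda>u. g (x u) \<bullet> g (y u)) has_real_derivative s * cos \<alpha> * (deriv x t - deriv y t)) (at t)"
    by simp
  then have "((\<lambda>u. sqrt (1 - (g (x u) \<bullet> g (y u))\<^sup>2)) has_real_derivative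
      inverse (sqrt (1 - c\<^sup>2)) / 2 * (- (2 * c * (s * cos \<alpha> * (deriv x t - deriv y t))))) (at t)"
    using c unfolding c_def
    by (intro DERIV_chain'[where g = sqrt, OF _ DERIV_real_sqrt]) (auto intro!: derivative_eq_intros)
  moreover have "inverse (sqrt (1 - c\<^sup>2)) / 2 * (- (2 * c * (s * cos \<alpha> * (deriv x t - deriv y t))))
      = - (c * cos \<alpha> * (deriv x t - deriv y t))"
    using c by (simp add: s_def field_simps)
  ultimately show ?thesis by (simp only: c_def)
qed

lemma contact_derivative_equations:
  fixes t :: real
  defines "P \<equiv> g (x t)" and "Q \<equiv> g (y t)" and "x' \<equiv> deriv x t" and "y' \<equiv> deriv y t"
  shows "x' * (vd (vd g) (x t) \<bullet> Q) + y' * (vd g (x t) \<bullet> vd g (y t)) + (cos \<alpha>)\<^sup>2 * (P \<bullet> Q) * (x' - y') = 0"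
    and "x' * (vd g (x t) \<bullet> vd g (y t)) + y' * (P \<bullet> vd (vd g) (y t)) - (cos \<alpha>)\<^sup>2 * (P \<bullet> Q) * (x' - y') = 0"
proof -
  note S = DERIV_cmult[OF chord_sine_has_derivative, of "cos \<alpha>" t]
  have "((\<lambda>u. vd g (x u) \<bullet> g (y u) - cos \<alpha> * sqrt (1 - (g (x u) \<bullet> g (y u))\<^sup>2)) has_real_derivative
      vd g (x t) \<bullet> (y' *\<^sub>R vd g (y t)) + (x' *\<^sub>R vd (vd g) (x t)) \<bullet> Q
      - cos \<alpha> * - ((P \<bullet> Q) * cos \<alpha> * (x' - y'))) (at t)"
    unfolding P_def Q_def x'_def y'_def
    by (rule DERIV_diff[OF has_real_derivative_inner[OF endpoint_has_vd(3,2)] S])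
  from has_real_derivative_const_eq_0[OF this] contact_equations(1)
  show "x' * (vd (vd g) (x t) \<bullet> Q) + y' * (vd g (x t) \<bullet> vd g (y t)) + (cos \<alpha>)\<^sup>2 * (P \<bullet> Q) * (x' - y') = 0"
    by (simp add: algebra_simps power2_eq_square)
  have "((\<lambda>u. g (x u) \<bullet> vd g (y u) + cos \<alpha> * sqrt (1 - (g (x u) \<bullet> g (y u))\<^sup>2)) has_real_derivative
      P \<bullet> (y' *\<^sub>R vd (vd g) (y t)) + (x' *\<^sub>R vd g (x t)) \<bullet> vd g (y t)
      + cos \<alpha> * - ((P \<bullet> Q) * cos \<alpha> * (x' - y'))) (at t)"
    unfolding P_def Q_def x'_def y'_def
    by (rule DERIV_add[OF has_real_derivative_inner[OF endpoint_has_vd(1,4)] S])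
  from has_real_derivative_const_eq_0[OF this] contact_equations(2)
  show "x' * (vd g (x t) \<bullet> vd g (y t)) + y' * (P \<bullet> vd (vd g) (y t)) - (cos \<alpha>)\<^sup>2 * (P \<bullet> Q) * (x' - y') = 0"
    by (simp add: algebra_simps power2_eq_square)
qed

lemma speed_relation:
  assumes "\<alpha> < pi"
  shows "(deriv y t)\<^sup>2 * ((geod_curv g (y t))\<^sup>2 + (sin \<alpha>)\<^sup>2) =
         (deriv x t)\<^sup>2 * ((geod_curv g (x t))\<^sup>2 + (sin \<alpha>)\<^sup>2)"
proof -
  have "sin \<alpha> > 0"
    using gutkin assms by (intro sin_gt_zero) (auto simp: gutkin_def)
  moreover have "sqrt (1 - (g (x t) \<bullet> g (y t))\<^sup>2) > 0"
    using chord_not_antipodal[of t] by simp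
  ultimately show ?thesis
    unfolding geod_curv_def
    using chord_not_antipodal[of t]
    by (intro chord_frame_relation[OF jet jet _ _ _ _ contact_equations contact_derivative_equations])
       simp_all
qed

lemma normal_components_vanish_if_angle_pi:
  assumes "\<alpha> = pi"
  shows "(g (x t) \<times> vd g (x t)) \<bullet> g (y t) = 0" and "(g (y t) \<times> vd g (y t)) \<bullet> g (x t) = 0"
proof -
  define c where "c = g (x t) \<bullet> g (y t)"
  define s where "s = sqrt (1 - c\<^sup>2)"
  have s2: "c\<^sup>2 + s\<^sup>2 = 1"
    using chord_not_antipodal[of t] by (simp add: s_def c_def)
  have unit: "g u \<bullet> g u = 1" "vd g u \<bullet> vd g u = 1" "g u \<bullet> vd g u = 0" for u
    using jet[of u] by (simp_all add: sphere_2jet_def)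
  have "g (y t) \<bullet> g (y t) = c\<^sup>2 + s\<^sup>2 + ((g (x t) \<times> vd g (x t)) \<bullet> g (y t))\<^sup>2"
    using inner_orthonormal_frame[OF unit[of "x t"], of "g (y t)" "g (y t)"] contact_equations(1)[of t] assms
    by (simp add: c_def s_def inner_commute power2_eq_square)
  then show "(g (x t) \<times> vd g (x t)) \<bullet> g (y t) = 0" using unit s2 by simp
  have "g (x t) \<bullet> g (x t) = c\<^sup>2 + s\<^sup>2 + ((g (y t) \<times> vd g (y t)) \<bullet> g (x t))\<^sup>2"
    using inner_orthonormal_frame[OF unit[of "y t"], of "g (x t)" "g (x t)"] contact_equations(2)[of t] assms
    by (simp add: c_def s_def inner_commute power2_eq_square)
  then show "(g (y t) \<times> vd g (y t)) \<bullet> g (x t) = 0" using unit s2 by simp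
qed

lemma geod_curv_vanishes_if_angle_pi:
  assumes "\<alpha> = pi"
  shows "geod_curv g (x t) = 0"
proof -
  define P Q TP TQ GP N where "P = g (x t)" and "Q = g (y t)" and "TP = vd g (x t)"
    and "TQ = vd g (y t)" and "GP = vd (vd g) (x t)" and "N = P \<times> TP"
  define s where "s = sqrt (1 - (P \<bullet> Q)\<^sup>2)"
  have s: "s > 0" using chord_not_antipodal[of t] by (simp add: s_def P_def Q_def)
  have unitP: "P \<bullet> P = 1" "TP \<bullet> TP = 1" "P \<bullet> TP = 0"
    and unitQ: "Q \<bullet> Q = 1" "TQ \<bullet> TQ = 1" "Q \<bullet> TQ = 0"
    using jet by (simp_all add: sphere_2jet_def P_def Q_def TP_def TQ_def)
  have contact: "TP \<bullet> Q = - s" "P \<bullet> TQ = s"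
    using contact_equations[of t] assms by (simp_all add: s_def P_def Q_def TP_def TQ_def)
  note normal = normal_components_vanish_if_angle_pi[OF assms, of t, folded P_def Q_def TP_def TQ_def]
  \<comment> \<open>the chord and both tangents lie in one great circle, the one through P with tangent TP\<close>
  have Q_eq: "Q = (P \<bullet> Q) *\<^sub>R P - s *\<^sub>R TP"
    using orthonormal_frame_expansion[OF unitP, of Q] contact normal(1)
    by (simp add: inner_commute)
  have P_eq: "P = (P \<bullet> Q) *\<^sub>R Q + s *\<^sub>R TQ"
    using orthonormal_frame_expansion[OF unitQ, of P] contact normal(2)
    by (simp add: inner_commute)
  have "N \<bullet> P = (P \<bullet> Q) * (N \<bullet> Q) + s * (N \<bullet> TQ)"
    by (subst P_eq) (simp add: inner_add_right)
  then have N_TQ: "N \<bullet> TQ = 0"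
    using s normal(1) by (simp add: N_def dot_cross_self inner_commute)
  have "(P \<times> GP) \<bullet> Q = - s * ((P \<times> GP) \<bullet> TP)"
    by (subst Q_eq) (simp add: inner_diff_right dot_cross_self)
  also have "\<dots> = s * geod_curv g (x t)"
    by (simp add: geod_curv_def P_def TP_def GP_def cross3_simps)
  finally have GP_Q: "(P \<times> GP) \<bullet> Q = s * geod_curv g (x t)" .
  have "((\<lambda>u. (g (x u) \<times> vd g (x u)) \<bullet> g (y u)) has_real_derivative
      N \<bullet> (deriv y t *\<^sub>R TQ) + (P \<times> (deriv x t *\<^sub>R GP) + (deriv x t *\<^sub>R TP) \<times> TP) \<bullet> Q) (at t)"
    unfolding N_def P_def Q_def TP_def TQ_def GP_def
    by (rule has_real_derivative_inner[OF has_vector_derivative_cross3[OF endpoint_has_vd(1,3)] endpoint_has_vd(2)])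
  from has_real_derivative_const_eq_0[OF this normal_components_vanish_if_angle_pi(1)[OF assms]]
  have "deriv x t * (s * geod_curv g (x t)) = 0"
    using N_TQ GP_Q by (simp add: cross_mult_right cross_mult_left)
  then show ?thesis using s endpoint_derivs(3)[of t] by simp
qed

lemma contact_angle_less_pi: "\<alpha> < pi"
proof (rule ccontr)
  assume "\<not> \<alpha> < pi"
  then have pi: "\<alpha> = pi" using gutkin by (simp add: gutkin_def)
  have "geod_curv g s = 0" for s
  proof -
    have "g s \<in> range (g \<circ> x)" using gutkin by (simp add: gutkin_def)
    then obtain t where "g s = g (x t)" by auto
    then show ?thesis
      using geod_curv_eq_if_same_point[OF closed] geod_curv_vanishes_if_angle_pi[OF pi] by metis
  qed
  moreover obtain n where "\<And>s. g s \<bullet> n > 0" using hemisphere by blast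
  ultimately show False using geodesic_closed_curve_not_in_hemisphere[OF closed] by blast
qed

end

lemma ratio_eq_sqrt_ratio:
  fixes a b A B :: real
  assumes "a > 0" "b > 0" "A > 0" "B > 0" "b\<^sup>2 * B = a\<^sup>2 * A"
  shows "b / a = sqrt A / sqrt B"
proof -
  have "b * sqrt B = a * sqrt A"
    using arg_cong[OF assms(5), of sqrt] assms(1-4) by (simp add: real_sqrt_mult)
  then show ?thesis using assms(1,4) by (simp add: field_simps)
qed

theorem mainTheorem4:
  fixes g :: "real \<Rightarrow> real^3" and L \<alpha> :: real and x y :: "real \<Rightarrow> real"
  assumes "gutkin g L \<alpha> x y"
  shows "(\<forall>t. deriv y t / deriv x t =
            sqrt ((geod_curv g (x t))\<^sup>2 + (sin \<alpha>)\<^sup>2) / sqrt ((geod_curv g (y t))\<^sup>2 + (sin \<alpha>)\<^sup>2))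
       \<and> (\<forall>a. (\<forall>t. deriv x t = a / sqrt ((geod_curv g (x t))\<^sup>2 + (sin \<alpha>)\<^sup>2)) \<longrightarrow>
              (\<forall>t. deriv y t = a / sqrt ((geod_curv g (y t))\<^sup>2 + (sin \<alpha>)\<^sup>2)))"
proof -
  interpret gutkin_curve g L \<alpha> x y by (rule gutkin_curve.intro[OF assms])
  have "sin \<alpha> > 0"
    using assms contact_angle_less_pi by (intro sin_gt_zero) (auto simp: gutkin_def)
  then have pos: "sqrt ((geod_curv g s)\<^sup>2 + (sin \<alpha>)\<^sup>2) > 0" for s
    by (simp add: add_nonneg_pos)
  have ratio: "deriv y t / deriv x t =
      sqrt ((geod_curv g (x t))\<^sup>2 + (sin \<alpha>)\<^sup>2) / sqrt ((geod_curv g (y t))\<^sup>2 + (sin \<alpha>)\<^sup>2)" for t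
    using speed_relation[OF contact_angle_less_pi] endpoint_derivs pos
    by (intro ratio_eq_sqrt_ratio) auto
  moreover have "deriv y t = a / sqrt ((geod_curv g (y t))\<^sup>2 + (sin \<alpha>)\<^sup>2)"
    if "\<forall>t. deriv x t = a / sqrt ((geod_curv g (x t))\<^sup>2 + (sin \<alpha>)\<^sup>2)" for a t
  proof -
    define A B where "A = sqrt ((geod_curv g (x t))\<^sup>2 + (sin \<alpha>)\<^sup>2)"
      and "B = sqrt ((geod_curv g (y t))\<^sup>2 + (sin \<alpha>)\<^sup>2)"
    have "deriv y t = (deriv y t / deriv x t) * deriv x t" using endpoint_derivs(3)[of t] by simp
    also have "\<dots> = (A / B) * (a / A)" using ratio[of t] that by (simp add: A_def B_def)
    also have "\<dots> = a / B" using pos[of "x t", folded A_def] by simp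
    finally show ?thesis by (simp add: B_def)
  qed
  ultimately show ?thesis by blast
qed

end
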